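(* Let $(F_1,+_1,\cdot_1)$ and $(F_2,+_2,\cdot_2)$ be left near-fields and assume $(F_1,+_1,\cdot_1)$ is a division ring. Then the canonical near-vector spaces $((F_1,+_1,\cdot_1),(F_1,\cdot_1))$ and $((F_2,+_2,\cdot_2),(F_2,\cdot_2))$ are isomorphic as near-vector spaces if and only if $(F_1,+_1,\cdot_1)$ and $(F_2,+_2,\cdot_2)$ are isomorphic as near-fields. In particular, if these canonical near-vector spaces are isomorphic, then $(F_2,+_2,\cdot_2)$ is a division ring.
   Context: A left near-field $(F,+,\cdot)$: $(F,+)$ a group with identity $0$, $(F\setminus\{0\},\cdot)$ a group, $0\cdot\alpha=0$, and $\gamma(\alpha+\beta)=\gamma\alpha+\gamma\beta$. A near-field isomorphism is a bijection preserving $+$ and $\cdot$. The canonical near-vector space of $(F,+,\cdot)$ is $((F,+,\cdot),(F,\cdot))$, with $F$ acting on $(F,+)$ by multiplication. An isomorphism $(\Psi,\varphi)$ of near-vector spaces from $((V_1,\boxplus_1,\boxdot_1),(F_1,\cdot_1))$ to $((V_2,\boxplus_2,\boxdot_2),(F_2,\cdot_2))$ consists of an additive bijection $\Psi:V_1\to V_2$ and a group isomorphism $\varphi:(F_1\setminus\{0\},\cdot_1)\to(F_2\setminus\{0\},\cdot_2)$ with $\Psi(\alpha\boxdot_1u)=\varphi(\alpha)\boxdot_2\Psi(u)$ for all $u\in V_1$, $\alpha\in F_1\setminus\{0\}$. *)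

theory Defs
  imports "HOL-Algebra.Group"
begin

definition left_near_field :: "'a set \<Rightarrow> ('a \<Rightarrow> 'a \<Rightarrow> 'a) \<Rightarrow> ('a \<Rightarrow> 'a \<Rightarrow> 'a) \<Rightarrow> 'a \<Rightarrow> bool" where
  "left_near_field F add mul z \<longleftrightarrow>
     group \<lparr>carrier = F, mult = add, one = z\<rparr> \<and>
     (\<exists>e. group \<lparr>carrier = F - {z}, mult = mul, one = e\<rparr>) \<and>
     (\<forall>a\<in>F. mul z a = z) \<and>
     (\<forall>g\<in>F. \<forall>a\<in>F. \<forall>b\<in>F. mul g (add a b) = add (mul g a) (mul g b))"

definition division_ring_on :: "'a set \<Rightarrow> ('a \<Rightarrow> 'a \<Rightarrow> 'a) \<Rightarrow> ('a \<Rightarrow> 'a \<Rightarrow> 'a) \<Rightarrow> 'a \<Rightarrow> bool" where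
  "division_ring_on F add mul z \<longleftrightarrow>
     left_near_field F add mul z \<and>
     (\<forall>a\<in>F. \<forall>b\<in>F. add a b = add b a) \<and>
     (\<forall>g\<in>F. \<forall>a\<in>F. \<forall>b\<in>F. mul (add a b) g = add (mul a g) (mul b g))"

definition near_field_iso ::
  "'a set \<Rightarrow> ('a \<Rightarrow> 'a \<Rightarrow> 'a) \<Rightarrow> ('a \<Rightarrow> 'a \<Rightarrow> 'a) \<Rightarrow>
   'b set \<Rightarrow> ('b \<Rightarrow> 'b \<Rightarrow> 'b) \<Rightarrow> ('b \<Rightarrow> 'b \<Rightarrow> 'b) \<Rightarrow> ('a \<Rightarrow> 'b) \<Rightarrow> bool" where
  "near_field_iso F1 add1 mul1 F2 add2 mul2 f \<longleftrightarrow>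
     bij_betw f F1 F2 \<and>
     (\<forall>a\<in>F1. \<forall>b\<in>F1. f (add1 a b) = add2 (f a) (f b)) \<and>
     (\<forall>a\<in>F1. \<forall>b\<in>F1. f (mul1 a b) = mul2 (f a) (f b))"

definition near_fields_isomorphic ::
  "'a set \<Rightarrow> ('a \<Rightarrow> 'a \<Rightarrow> 'a) \<Rightarrow> ('a \<Rightarrow> 'a \<Rightarrow> 'a) \<Rightarrow>
   'b set \<Rightarrow> ('b \<Rightarrow> 'b \<Rightarrow> 'b) \<Rightarrow> ('b \<Rightarrow> 'b \<Rightarrow> 'b) \<Rightarrow> bool" where
  "near_fields_isomorphic F1 add1 mul1 F2 add2 mul2 \<longleftrightarrow>
     (\<exists>f. near_field_iso F1 add1 mul1 F2 add2 mul2 f)"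

text \<open>Isomorphism (Psi, phi) of near-vector spaces ((V1,plus1,act1),(F1,mul1)) and
  ((V2,plus2,act2),(F2,mul2)), where z1, z2 are the zeros of the scalar near-fields.\<close>
definition nvs_iso ::
  "'v set \<Rightarrow> ('v \<Rightarrow> 'v \<Rightarrow> 'v) \<Rightarrow> ('a \<Rightarrow> 'v \<Rightarrow> 'v) \<Rightarrow> 'a set \<Rightarrow> ('a \<Rightarrow> 'a \<Rightarrow> 'a) \<Rightarrow> 'a \<Rightarrow>
   'w set \<Rightarrow> ('w \<Rightarrow> 'w \<Rightarrow> 'w) \<Rightarrow> ('b \<Rightarrow> 'w \<Rightarrow> 'w) \<Rightarrow> 'b set \<Rightarrow> ('b \<Rightarrow> 'b \<Rightarrow> 'b) \<Rightarrow> 'b \<Rightarrow>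
   ('v \<Rightarrow> 'w) \<Rightarrow> ('a \<Rightarrow> 'b) \<Rightarrow> bool" where
  "nvs_iso V1 plus1 act1 F1 mul1 z1 V2 plus2 act2 F2 mul2 z2 \<Psi> \<phi> \<longleftrightarrow>
     bij_betw \<Psi> V1 V2 \<and>
     (\<forall>u\<in>V1. \<forall>v\<in>V1. \<Psi> (plus1 u v) = plus2 (\<Psi> u) (\<Psi> v)) \<and>
     bij_betw \<phi> (F1 - {z1}) (F2 - {z2}) \<and>
     (\<forall>a\<in>F1 - {z1}. \<forall>b\<in>F1 - {z1}. \<phi> (mul1 a b) = mul2 (\<phi> a) (\<phi> b)) \<and>
     (\<forall>u\<in>V1. \<forall>a\<in>F1 - {z1}. \<Psi> (act1 a u) = act2 (\<phi> a) (\<Psi> u))"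

definition canonical_nvs_isomorphic ::
  "'a set \<Rightarrow> ('a \<Rightarrow> 'a \<Rightarrow> 'a) \<Rightarrow> ('a \<Rightarrow> 'a \<Rightarrow> 'a) \<Rightarrow> 'a \<Rightarrow>
   'b set \<Rightarrow> ('b \<Rightarrow> 'b \<Rightarrow> 'b) \<Rightarrow> ('b \<Rightarrow> 'b \<Rightarrow> 'b) \<Rightarrow> 'b \<Rightarrow> bool" where
  "canonical_nvs_isomorphic F1 add1 mul1 z1 F2 add2 mul2 z2 \<longleftrightarrow>
     (\<exists>\<Psi> \<phi>. nvs_iso F1 add1 mul1 F1 mul1 z1 F2 add2 mul2 F2 mul2 z2 \<Psi> \<phi>)"

end

theory Submission
  imports Defs
begin

text \<open>A near-vector space isomorphism \<open>(\<Psi>, \<phi>)\<close> between canonical near-vector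
  spaces is already a near-field isomorphism up to a scalar: putting \<open>c = \<Psi> 1\<close>, one has
  \<open>\<Psi> a = \<phi> a \<cdot> c\<close>, so \<open>x \<mapsto> c\<inverse> \<cdot> \<Psi> x\<close> is additive by left distributivity and
  multiplicative because it is \<open>\<phi>\<close> conjugated by \<open>c\<close> on non-zero elements. Conversely a
  near-field isomorphism \<open>f\<close> yields the near-vector space isomorphism \<open>(f, f)\<close>. Being a division
  ring is transported along near-field isomorphisms; this is the only place the hypothesis
  on \<open>F1\<close> is used.\<close>

lemma left_near_field_add_group:
  "left_near_field F add mul z \<Longrightarrow> group \<lparr>carrier = F, mult = add, one = z\<rparr>"
  unfolding left_near_field_def by blast

lemma left_near_field_mult_group:
  assumes "left_near_field F add mul z"
  obtains e where "group \<lparr>carrier = F - {z}, mult = mul, one = e\<rparr>"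
  using assms unfolding left_near_field_def by blast

lemma left_near_field_zero_mult:
  "left_near_field F add mul z \<Longrightarrow> a \<in> F \<Longrightarrow> mul z a = z"
  unfolding left_near_field_def by blast

lemma left_near_field_distrib:
  "left_near_field F add mul z \<Longrightarrow> g \<in> F \<Longrightarrow> a \<in> F \<Longrightarrow> b \<in> F
    \<Longrightarrow> mul g (add a b) = add (mul g a) (mul g b)"
  unfolding left_near_field_def by blast

lemma left_near_field_zero_closed:
  assumes "left_near_field F add mul z"
  shows "z \<in> F"
proof -
  interpret A: group "\<lparr>carrier = F, mult = add, one = z\<rparr>"
    using left_near_field_add_group[OF assms] .
  show ?thesis using A.one_closed by simp
qed

lemma left_near_field_add_closed:
  assumes "left_near_field F add mul z" "a \<in> F" "b \<in> F"
  shows "add a b \<in> F"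
proof -
  interpret A: group "\<lparr>carrier = F, mult = add, one = z\<rparr>"
    using left_near_field_add_group[OF assms(1)] .
  show ?thesis using A.m_closed[of a b] assms(2,3) by simp
qed

lemma left_near_field_mult_nonzero_closed:
  assumes "left_near_field F add mul z" "a \<in> F - {z}" "b \<in> F - {z}"
  shows "mul a b \<in> F - {z}"
proof -
  obtain e where "group \<lparr>carrier = F - {z}, mult = mul, one = e\<rparr>"
    using left_near_field_mult_group[OF assms(1)] .
  then interpret M: group "\<lparr>carrier = F - {z}, mult = mul, one = e\<rparr>" .
  show ?thesis using M.m_closed[of a b] assms(2,3) by simp
qed

lemma left_near_field_mult_zero:
  assumes L: "left_near_field F add mul z" and g: "g \<in> F"
  shows "mul g z = z"
proof (cases "g = z")
  case True
  then show ?thesis using left_near_field_zero_mult[OF L] left_near_field_zero_closed[OF L] by simp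
next
  case False
  interpret A: group "\<lparr>carrier = F, mult = add, one = z\<rparr>"
    using left_near_field_add_group[OF L] .
  obtain e where "group \<lparr>carrier = F - {z}, mult = mul, one = e\<rparr>"
    using left_near_field_mult_group[OF L] .
  then interpret M: group "\<lparr>carrier = F - {z}, mult = mul, one = e\<rparr>" .
  define n where "n = inv\<^bsub>\<lparr>carrier = F, mult = add, one = z\<rparr>\<^esub> e"
  have e: "e \<in> F - {z}" using M.one_closed by simp
  then have n: "n \<in> F - {z}" "add e n = z"
    using A.inv_closed[of e] A.r_inv[of e] A.inv_eq_1_iff[of e] unfolding n_def by auto
  \<comment> \<open>Writing \<open>z = e + n\<close> with \<open>e, n \<noteq> z\<close> shows that \<open>g \<cdot> z\<close> lies in \<open>F\<close>;
    it is then an idempotent of the additive group.\<close>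
  have "mul g z = add (mul g e) (mul g n)"
    using left_near_field_distrib[OF L g, of e n] e n by simp
  then have gz: "mul g z \<in> F"
    using left_near_field_add_closed[OF L] left_near_field_mult_nonzero_closed[OF L] g False e n
    by auto
  have "add (mul g z) (mul g z) = mul g z"
    using left_near_field_distrib[OF L g, of z z] left_near_field_zero_closed[OF L] A.l_one[of z]
    by simp
  then show ?thesis using A.l_cancel_one[of "mul g z" "mul g z"] gz by simp
qed

lemma left_near_field_mult_closed:
  assumes L: "left_near_field F add mul z" and "a \<in> F" "b \<in> F"
  shows "mul a b \<in> F"
  using assms left_near_field_mult_nonzero_closed[OF L, of a b] left_near_field_zero_closed[OF L]
    left_near_field_zero_mult[OF L] left_near_field_mult_zero[OF L]
  by (cases "a = z \<or> b = z") auto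

lemma left_near_field_mult_assoc:
  assumes L: "left_near_field F add mul z" and x: "x \<in> F" and y: "y \<in> F" and w: "w \<in> F"
  shows "mul (mul x y) w = mul x (mul y w)"
proof (cases "x = z \<or> y = z \<or> w = z")
  case True
  then show ?thesis
    using assms left_near_field_mult_closed[OF L] left_near_field_zero_mult[OF L]
      left_near_field_mult_zero[OF L] by auto
next
  case False
  obtain e where "group \<lparr>carrier = F - {z}, mult = mul, one = e\<rparr>"
    using left_near_field_mult_group[OF L] .
  then interpret M: group "\<lparr>carrier = F - {z}, mult = mul, one = e\<rparr>" .
  show ?thesis using M.m_assoc[of x y w] False x y w by simp
qed

lemma left_near_field_one_mult:
  assumes L: "left_near_field F add mul z"
    and M: "group \<lparr>carrier = F - {z}, mult = mul, one = e\<rparr>" and x: "x \<in> F"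
  shows "mul e x = x"
proof -
  interpret M: group "\<lparr>carrier = F - {z}, mult = mul, one = e\<rparr>" by fact
  show ?thesis
    using M.l_one[of x] M.one_closed left_near_field_mult_zero[OF L] x by (cases "x = z") auto
qed

lemma left_near_field_bij_left_mult:
  assumes L: "left_near_field F add mul z" and c: "c \<in> F - {z}"
  shows "bij_betw (mul c) F F"
proof -
  obtain e where "group \<lparr>carrier = F - {z}, mult = mul, one = e\<rparr>"
    using left_near_field_mult_group[OF L] .
  then interpret M: group "\<lparr>carrier = F - {z}, mult = mul, one = e\<rparr>" .
  define ci where "ci = inv\<^bsub>\<lparr>carrier = F - {z}, mult = mul, one = e\<rparr>\<^esub> c"
  have ci: "ci \<in> F - {z}" "mul c ci = e" "mul ci c = e"
    using M.inv_closed[of c] M.r_inv[of c] M.l_inv[of c] c unfolding ci_def by auto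
  show ?thesis
  proof (rule bij_betwI[where g = "mul ci"])
    show "mul c \<in> F \<rightarrow> F" "mul ci \<in> F \<rightarrow> F"
      using left_near_field_mult_closed[OF L] c ci by auto
  next
    fix y assume y: "y \<in> F"
    have "mul ci (mul c y) = mul (mul ci c) y"
      using left_near_field_mult_assoc[OF L, of ci c y] c ci y by simp
    then show "mul ci (mul c y) = y"
      using left_near_field_one_mult[OF L M.is_group y] ci by simp
    have "mul c (mul ci y) = mul (mul c ci) y"
      using left_near_field_mult_assoc[OF L, of c ci y] c ci y by simp
    then show "mul c (mul ci y) = y"
      using left_near_field_one_mult[OF L M.is_group y] ci by simp
  qed
qed

lemma left_near_field_add_hom_zero:
  assumes "left_near_field F1 add1 mul1 z1" "left_near_field F2 add2 mul2 z2"
    and "\<And>a. a \<in> F1 \<Longrightarrow> f a \<in> F2"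
    and "\<And>a b. a \<in> F1 \<Longrightarrow> b \<in> F1 \<Longrightarrow> f (add1 a b) = add2 (f a) (f b)"
  shows "f z1 = z2"
proof -
  have "f \<in> hom \<lparr>carrier = F1, mult = add1, one = z1\<rparr> \<lparr>carrier = F2, mult = add2, one = z2\<rparr>"
    using assms(3,4) by (intro homI) simp_all
  from hom_one[OF this left_near_field_add_group[OF assms(1)] left_near_field_add_group[OF assms(2)]]
  show ?thesis by simp
qed

lemma near_field_iso_zero:
  assumes "left_near_field F1 add1 mul1 z1" "left_near_field F2 add2 mul2 z2"
    and "near_field_iso F1 add1 mul1 F2 add2 mul2 f"
  shows "f z1 = z2"
proof (rule left_near_field_add_hom_zero[OF assms(1,2)])
  show "\<And>a. a \<in> F1 \<Longrightarrow> f a \<in> F2" "\<And>a b. a \<in> F1 \<Longrightarrow> b \<in> F1 \<Longrightarrow> f (add1 a b) = add2 (f a) (f b)"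
    using assms(3) bij_betw_apply unfolding near_field_iso_def by fast+
qed

lemma canonical_nvs_iso_of_near_field_iso:
  assumes L1: "left_near_field F1 add1 mul1 z1" and L2: "left_near_field F2 add2 mul2 z2"
    and I: "near_field_iso F1 add1 mul1 F2 add2 mul2 f"
  shows "nvs_iso F1 add1 mul1 F1 mul1 z1 F2 add2 mul2 F2 mul2 z2 f f"
proof -
  have f: "bij_betw f F1 F2" using I unfolding near_field_iso_def by blast
  have "bij_betw f (F1 - {z1}) (F2 - {z2})"
    using bij_betw_DiffI[OF f, of "{z1}" "{z2}"] near_field_iso_zero[OF assms]
      left_near_field_zero_closed[OF L1] left_near_field_zero_closed[OF L2] by auto
  then show ?thesis using I unfolding nvs_iso_def near_field_iso_def by auto
qed

lemma near_field_iso_of_canonical_nvs_iso: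
  assumes L1: "left_near_field F1 add1 mul1 z1" and L2: "left_near_field F2 add2 mul2 z2"
    and N: "nvs_iso F1 add1 mul1 F1 mul1 z1 F2 add2 mul2 F2 mul2 z2 \<Psi> \<phi>"
  shows "\<exists>h. near_field_iso F1 add1 mul1 F2 add2 mul2 h"
proof -
  have \<Psi>: "bij_betw \<Psi> F1 F2"
    and \<Psi>_add: "\<And>u v. u \<in> F1 \<Longrightarrow> v \<in> F1 \<Longrightarrow> \<Psi> (add1 u v) = add2 (\<Psi> u) (\<Psi> v)"
    and \<phi>: "\<And>a. a \<in> F1 - {z1} \<Longrightarrow> \<phi> a \<in> F2 - {z2}"
    and \<Psi>_mult: "\<And>a u. a \<in> F1 - {z1} \<Longrightarrow> u \<in> F1 \<Longrightarrow> \<Psi> (mul1 a u) = mul2 (\<phi> a) (\<Psi> u)"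
    using N bij_betw_apply unfolding nvs_iso_def by (fast, fast, fast, fast)
  have \<Psi>_F: "\<And>x. x \<in> F1 \<Longrightarrow> \<Psi> x \<in> F2" using \<Psi> bij_betw_apply by fast
  have \<Psi>_zero: "\<Psi> z1 = z2" using left_near_field_add_hom_zero[OF L1 L2] \<Psi>_F \<Psi>_add by blast
  obtain e1 where "group \<lparr>carrier = F1 - {z1}, mult = mul1, one = e1\<rparr>"
    using left_near_field_mult_group[OF L1] .
  then interpret M1: group "\<lparr>carrier = F1 - {z1}, mult = mul1, one = e1\<rparr>" .
  obtain e2 where "group \<lparr>carrier = F2 - {z2}, mult = mul2, one = e2\<rparr>"
    using left_near_field_mult_group[OF L2] .
  then interpret M2: group "\<lparr>carrier = F2 - {z2}, mult = mul2, one = e2\<rparr>" .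
  have e1: "e1 \<in> F1 - {z1}" using M1.one_closed by simp
  define c where "c = \<Psi> e1"
  have "\<Psi> e1 \<noteq> \<Psi> z1"
    using inj_onD[OF bij_betw_imp_inj_on[OF \<Psi>]] e1 left_near_field_zero_closed[OF L1] by blast
  then have c: "c \<in> F2 - {z2}" using \<Psi>_F e1 \<Psi>_zero unfolding c_def by simp
  define ci where "ci = inv\<^bsub>\<lparr>carrier = F2 - {z2}, mult = mul2, one = e2\<rparr>\<^esub> c"
  have ci: "ci \<in> F2 - {z2}" "mul2 c ci = e2"
    using M2.inv_closed[of c] M2.r_inv[of c] c unfolding ci_def by auto
  have \<Psi>_scalar: "\<Psi> a = mul2 (\<phi> a) c" if "a \<in> F1 - {z1}" for a
    using \<Psi>_mult[OF that, of e1] M1.r_one[of a] that e1 unfolding c_def by simp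
  define h where "h x = mul2 ci (\<Psi> x)" for x
  have h_F: "h x \<in> F2" if "x \<in> F1" for x
    using left_near_field_mult_closed[OF L2] ci \<Psi>_F that unfolding h_def by blast
  have "bij_betw h F1 F2"
    using bij_betw_trans[OF \<Psi> left_near_field_bij_left_mult[OF L2 ci(1)]]
    unfolding h_def comp_def by simp
  moreover have "h (add1 a b) = add2 (h a) (h b)" if "a \<in> F1" "b \<in> F1" for a b
    using \<Psi>_add left_near_field_distrib[OF L2] ci \<Psi>_F that unfolding h_def by auto
  moreover have "h (mul1 a b) = mul2 (h a) (h b)" if a: "a \<in> F1" and b: "b \<in> F1" for a b
  proof (cases "a = z1")
    case True
    then show ?thesis
      using h_F b left_near_field_zero_mult[OF L1] left_near_field_zero_mult[OF L2]
        left_near_field_mult_zero[OF L2] \<Psi>_zero ci unfolding h_def by auto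
  next
    case False
    then have a': "a \<in> F1 - {z1}" using a by simp
    note assoc = left_near_field_mult_assoc[OF L2]
    have "mul2 (h a) (h b) = mul2 (mul2 ci (mul2 (\<phi> a) c)) (mul2 ci (\<Psi> b))"
      unfolding h_def using \<Psi>_scalar[OF a'] by simp
    also have "\<dots> = mul2 ci (mul2 (\<phi> a) (mul2 (mul2 c ci) (\<Psi> b)))"
      using assoc[of ci "mul2 (\<phi> a) c" "mul2 ci (\<Psi> b)"] assoc[of "\<phi> a" c "mul2 ci (\<Psi> b)"]
        assoc[of c ci "\<Psi> b"] left_near_field_mult_closed[OF L2] \<phi>[OF a'] c ci \<Psi>_F[OF b]
      by simp
    also have "\<dots> = mul2 ci (\<Psi> (mul1 a b))"
      using ci(2) left_near_field_one_mult[OF L2 M2.is_group \<Psi>_F[OF b]] \<Psi>_mult[OF a' b]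
      by (simp only:)
    finally show ?thesis unfolding h_def by simp
  qed
  ultimately show ?thesis unfolding near_field_iso_def by blast
qed

lemma division_ring_on_near_field_iso:
  assumes D: "division_ring_on F1 add1 mul1 z1" and L2: "left_near_field F2 add2 mul2 z2"
    and I: "near_field_iso F1 add1 mul1 F2 add2 mul2 f"
  shows "division_ring_on F2 add2 mul2 z2"
proof -
  have L1: "left_near_field F1 add1 mul1 z1" using D unfolding division_ring_on_def by blast
  have f_add: "\<And>a b. a \<in> F1 \<Longrightarrow> b \<in> F1 \<Longrightarrow> f (add1 a b) = add2 (f a) (f b)"
    and f_mult: "\<And>a b. a \<in> F1 \<Longrightarrow> b \<in> F1 \<Longrightarrow> f (mul1 a b) = mul2 (f a) (f b)"
    using I unfolding near_field_iso_def by auto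
  have F2: "F2 = f ` F1" using I unfolding near_field_iso_def bij_betw_def by blast
  have add_comm: "\<forall>a\<in>F1. \<forall>b\<in>F1. add1 a b = add1 b a"
    and right_distrib: "\<forall>g\<in>F1. \<forall>a\<in>F1. \<forall>b\<in>F1. mul1 (add1 a b) g = add1 (mul1 a g) (mul1 b g)"
    using D unfolding division_ring_on_def by auto
  have "add2 (f a) (f b) = add2 (f b) (f a)" if "a \<in> F1" "b \<in> F1" for a b
    using that add_comm f_add by metis
  moreover have "mul2 (add2 (f a) (f b)) (f g) = add2 (mul2 (f a) (f g)) (mul2 (f b) (f g))"
    if "g \<in> F1" "a \<in> F1" "b \<in> F1" for g a b
  proof -
    have "mul2 (add2 (f a) (f b)) (f g) = f (mul1 (add1 a b) g)"
      using that f_add f_mult left_near_field_add_closed[OF L1] by simp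
    also have "\<dots> = f (add1 (mul1 a g) (mul1 b g))"
      using that right_distrib by simp
    also have "\<dots> = add2 (mul2 (f a) (f g)) (mul2 (f b) (f g))"
      using that f_add f_mult left_near_field_mult_closed[OF L1] by simp
    finally show ?thesis .
  qed
  ultimately have "(\<forall>x\<in>F2. \<forall>y\<in>F2. add2 x y = add2 y x) \<and>
      (\<forall>g\<in>F2. \<forall>x\<in>F2. \<forall>y\<in>F2. mul2 (add2 x y) g = add2 (mul2 x g) (mul2 y g))"
    unfolding F2 by blast
  then show ?thesis using L2 unfolding division_ring_on_def by blast
qed

theorem mainTheorem10:
  fixes F1 :: "'a set" and add1 mul1 :: "'a \<Rightarrow> 'a \<Rightarrow> 'a" and z1 :: 'a
    and F2 :: "'b set" and add2 mul2 :: "'b \<Rightarrow> 'b \<Rightarrow> 'b" and z2 :: 'b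
  assumes "left_near_field F1 add1 mul1 z1"
    and "left_near_field F2 add2 mul2 z2"
    and "division_ring_on F1 add1 mul1 z1"
  shows "(canonical_nvs_isomorphic F1 add1 mul1 z1 F2 add2 mul2 z2 \<longleftrightarrow>
            near_fields_isomorphic F1 add1 mul1 F2 add2 mul2)
       \<and> (canonical_nvs_isomorphic F1 add1 mul1 z1 F2 add2 mul2 z2 \<longrightarrow>
            division_ring_on F2 add2 mul2 z2)"
proof -
  have iff: "canonical_nvs_isomorphic F1 add1 mul1 z1 F2 add2 mul2 z2 \<longleftrightarrow>
             near_fields_isomorphic F1 add1 mul1 F2 add2 mul2"
    using near_field_iso_of_canonical_nvs_iso[OF assms(1,2)]
      canonical_nvs_iso_of_near_field_iso[OF assms(1,2)]
    unfolding canonical_nvs_isomorphic_def near_fields_isomorphic_def by blast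
  then show ?thesis
    using division_ring_on_near_field_iso[OF assms(3,2)]
    unfolding near_fields_isomorphic_def by blast
qed

end
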